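(* Let $\Psi$ be a well-formed declarative context (containing only universal type variables and term-variable typings) and $A,B$ types with $\Psi\vdash A$ and $\Psi\vdash B$. If $\Psi\vdash A<:B\dashv\Delta$ for some context $\Delta$ (algorithmic subtyping), then $\Psi\vdash A\le B$ (declarative subtyping).
   Context: Declarative types $A ::= 1\mid\alpha\mid\forall\alpha.A\mid A\to B$; declarative contexts $\Psi ::= \cdot\mid\Psi,\alpha\mid\Psi,x:A$. Declarative subtyping $\Psi\vdash A\le B$: least relation with $\alpha\in\Psi\Rightarrow\Psi\vdash\alpha\le\alpha$; $\Psi\vdash1\le1$; ($\Psi\vdash B_1\le A_1$, $\Psi\vdash A_2\le B_2$) $\Rightarrow\Psi\vdash A_1\to A_2\le B_1\to B_2$; ($\Psi\vdash\tau$ for a quantifier-free $\tau$, $\Psi\vdash[\tau/\alpha]A\le B$) $\Rightarrow\Psi\vdash\forall\alpha.A\le B$; $\Psi,\beta\vdash A\le B\Rightarrow\Psi\vdash A\le\forall\beta.B$. Algorithmic types add existential variables $\hat\alpha$: $A ::= 1\mid\alpha\mid\hat\alpha\mid\forall\alpha.A\mid A\to B$; monotypes $\tau ::= 1\mid\alpha\mid\hat\alpha\mid\tau\to\tau'$. Algorithmic contexts $\Gamma ::= \cdot\mid\Gamma,\alpha\mid\Gamma,x:A\mid\Gamma,\hat\alpha\mid\Gamma,\hat\alpha=\tau\mid\Gamma,\blacktriangleright_{\hat\alpha}$ (unsolved evar, solved evar, marker), each variable declared at most once, each type/solution well-formed under the prefix to its left. $\Gamma\vdash A$: $\alpha$ declared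 in $\Gamma$, $\hat\alpha$ declared (solved or not) in $\Gamma$, arrows componentwise, $\Gamma\vdash\forall\alpha.A$ iff $\Gamma,\alpha\vdash A$. $\Gamma[\Theta]$ denotes a context with $\Theta$ somewhere inside; $\Gamma[\hat\alpha][\hat\beta]$ means $\hat\alpha$ is declared to the left of $\hat\beta$. $[\Gamma]A$ replaces each solved $\hat\alpha$ (with $\hat\alpha=\tau\in\Gamma$) by $[\Gamma]\tau$, recursively. Variables introduced in premises ($\hat\alpha,\hat\alpha_1,\hat\alpha_2,\hat\beta,\beta$) are fresh. Algorithmic subtyping $\Gamma\vdash A<:B\dashv\Delta$: $\Gamma[\alpha]\vdash\alpha<:\alpha\dashv\Gamma[\alpha]$; $\Gamma\vdash1<:1\dashv\Gamma$; $\Gamma[\hat\alpha]\vdash\hat\alpha<:\hat\alpha\dashv\Gamma[\hat\alpha]$; ($\Gamma\vdash B_1<:A_1\dashv\Theta$, $\Theta\vdash[\Theta]A_2<:[\Theta]B_2\dashv\Delta$) $\Rightarrow\Gamma\vdash A_1\to A_2<:B_1\to B_2\dashv\Delta$; $\Gamma,\blacktriangleright_{\hat\alpha},\hat\alpha\vdash[\hat\alpha/\alpha]A<:B\dashv\Delta,\blacktriangleright_{\hat\alpha},\Theta\Rightarrow\Gamma\vdash\forall\alpha.A<:B\dashv\Delta$; $\Gamma,\alpha\vdash A<:B\dashv\Delta,\alpha,\Theta\Rightarrow\Gamma\vdash A<:\forall\alpha.B\dashv\Delta$; ($\hat\alpha\notin FV(A)$, $\Gamma[\hat\alpha]\vdash\hat\alpha:\leqq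 A\dashv\Delta$) $\Rightarrow\Gamma[\hat\alpha]\vdash\hat\alpha<:A\dashv\Delta$; ($\hat\alpha\notin FV(A)$, $\Gamma[\hat\alpha]\vdash A\leqq:\hat\alpha\dashv\Delta$) $\Rightarrow\Gamma[\hat\alpha]\vdash A<:\hat\alpha\dashv\Delta$. Instantiation $\Gamma\vdash\hat\alpha:\leqq A\dashv\Delta$: ($\Gamma\vdash\tau$ monotype) $\Rightarrow\Gamma,\hat\alpha,\Gamma'\vdash\hat\alpha:\leqq\tau\dashv\Gamma,\hat\alpha=\tau,\Gamma'$; $\Gamma[\hat\alpha][\hat\beta]\vdash\hat\alpha:\leqq\hat\beta\dashv\Gamma[\hat\alpha][\hat\beta=\hat\alpha]$; ($\Gamma[\hat\alpha_2,\hat\alpha_1,\hat\alpha=\hat\alpha_1\to\hat\alpha_2]\vdash A_1\leqq:\hat\alpha_1\dashv\Theta$, $\Theta\vdash\hat\alpha_2:\leqq[\Theta]A_2\dashv\Delta$) $\Rightarrow\Gamma[\hat\alpha]\vdash\hat\alpha:\leqq A_1\to A_2\dashv\Delta$; $\Gamma[\hat\alpha],\beta\vdash\hat\alpha:\leqq B\dashv\Delta,\beta,\Delta'\Rightarrow\Gamma[\hat\alpha]\vdash\hat\alpha:\leqq\forall\beta.B\dashv\Delta$. Instantiation $\Gamma\vdash A\leqq:\hat\alpha\dashv\Delta$: ($\Gamma\vdash\tau$) $\Rightarrow\Gamma,\hat\alpha,\Gamma'\vdash\tau\leqq:\hat\alpha\dashv\Gamma,\hat\alpha=\tau,\Gamma'$;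 $\Gamma[\hat\alpha][\hat\beta]\vdash\hat\beta\leqq:\hat\alpha\dashv\Gamma[\hat\alpha][\hat\beta=\hat\alpha]$; ($\Gamma[\hat\alpha_2,\hat\alpha_1,\hat\alpha=\hat\alpha_1\to\hat\alpha_2]\vdash\hat\alpha_1:\leqq A_1\dashv\Theta$, $\Theta\vdash[\Theta]A_2\leqq:\hat\alpha_2\dashv\Delta$) $\Rightarrow\Gamma[\hat\alpha]\vdash A_1\to A_2\leqq:\hat\alpha\dashv\Delta$; $\Gamma[\hat\alpha],\blacktriangleright_{\hat\beta},\hat\beta\vdash[\hat\beta/\beta]B\leqq:\hat\alpha\dashv\Delta,\blacktriangleright_{\hat\beta},\Delta'\Rightarrow\Gamma[\hat\alpha]\vdash\forall\beta.B\leqq:\hat\alpha\dashv\Delta$. *)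

theory Defs
  imports Main
begin

text \<open>Types in locally nameless representation: bound type variables are
de Bruijn indices (TBVar), free universal variables are TVar, existential
variables are TEVar.  TAll binds index 0.\<close>

datatype ty =
    TUnit
  | TBVar nat
  | TVar nat
  | TEVar nat
  | TAll ty
  | TArr ty ty

fun open_rec :: "nat \<Rightarrow> ty \<Rightarrow> ty \<Rightarrow> ty" where
  "open_rec k u TUnit = TUnit"
| "open_rec k u (TBVar i) = (if i = k then u else TBVar i)"
| "open_rec k u (TVar a) = TVar a"
| "open_rec k u (TEVar a) = TEVar a"
| "open_rec k u (TAll A) = TAll (open_rec (Suc k) u A)"
| "open_rec k u (TArr A B) = TArr (open_rec k u A) (open_rec k u B)"

text \<open>For \<open>TAll A\<close> (i.e. \<forall>\<alpha>. A), \<open>open_typ A u\<close> is [u/\<alpha>]A.\<close>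
definition open_typ :: "ty \<Rightarrow> ty \<Rightarrow> ty" where
  "open_typ A u = open_rec 0 u A"

fun ftv :: "ty \<Rightarrow> nat set" where
  "ftv TUnit = {}"
| "ftv (TBVar i) = {}"
| "ftv (TVar a) = {a}"
| "ftv (TEVar a) = {}"
| "ftv (TAll A) = ftv A"
| "ftv (TArr A B) = ftv A \<union> ftv B"

fun fev :: "ty \<Rightarrow> nat set" where
  "fev TUnit = {}"
| "fev (TBVar i) = {}"
| "fev (TVar a) = {}"
| "fev (TEVar a) = {a}"
| "fev (TAll A) = fev A"
| "fev (TArr A B) = fev A \<union> fev B"

fun mono :: "ty \<Rightarrow> bool" where
  "mono TUnit = True"
| "mono (TBVar i) = False"
| "mono (TVar a) = True"
| "mono (TEVar a) = True"
| "mono (TAll A) = False"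
| "mono (TArr A B) = (mono A \<and> mono B)"

fun esubst :: "nat \<Rightarrow> ty \<Rightarrow> ty \<Rightarrow> ty" where
  "esubst a t TUnit = TUnit"
| "esubst a t (TBVar i) = TBVar i"
| "esubst a t (TVar b) = TVar b"
| "esubst a t (TEVar b) = (if b = a then t else TEVar b)"
| "esubst a t (TAll A) = TAll (esubst a t A)"
| "esubst a t (TArr A B) = TArr (esubst a t A) (esubst a t B)"

text \<open>Context entries; contexts are lists growing to the right
(\<open>\<Gamma>, e\<close> is \<open>\<Gamma> @ [e]\<close>).\<close>
datatype centry =
    CTVar nat
  | CVar nat ty
  | CEVar nat
  | CSolved nat ty
  | CMarker nat

type_synonym ctx = "centry list"

definition tvars :: "ctx \<Rightarrow> nat set" where
  "tvars G = {a. CTVar a \<in> set G}"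

definition evars :: "ctx \<Rightarrow> nat set" where
  "evars G = {a. CEVar a \<in> set G \<or> (\<exists>t. CSolved a t \<in> set G)}"

definition markers :: "ctx \<Rightarrow> nat set" where
  "markers G = {a. CMarker a \<in> set G}"

definition vars :: "ctx \<Rightarrow> nat set" where
  "vars G = {x. \<exists>A. CVar x A \<in> set G}"

inductive wf_typ :: "ctx \<Rightarrow> ty \<Rightarrow> bool" where
  wf_unit: "wf_typ G TUnit"
| wf_tvar: "a \<in> tvars G \<Longrightarrow> wf_typ G (TVar a)"
| wf_evar: "a \<in> evars G \<Longrightarrow> wf_typ G (TEVar a)"
| wf_arr: "wf_typ G A \<Longrightarrow> wf_typ G B \<Longrightarrow> wf_typ G (TArr A B)"
| wf_all: "a \<notin> tvars G \<Longrightarrow> a \<notin> ftv A \<Longrightarrow>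
           wf_typ (G @ [CTVar a]) (open_typ A (TVar a)) \<Longrightarrow> wf_typ G (TAll A)"

inductive wf_ctx :: "ctx \<Rightarrow> bool" where
  wfc_nil: "wf_ctx []"
| wfc_tvar: "wf_ctx G \<Longrightarrow> a \<notin> tvars G \<Longrightarrow> wf_ctx (G @ [CTVar a])"
| wfc_var: "wf_ctx G \<Longrightarrow> x \<notin> vars G \<Longrightarrow> wf_typ G A \<Longrightarrow> wf_ctx (G @ [CVar x A])"
| wfc_evar: "wf_ctx G \<Longrightarrow> a \<notin> evars G \<Longrightarrow> wf_ctx (G @ [CEVar a])"
| wfc_solved: "wf_ctx G \<Longrightarrow> a \<notin> evars G \<Longrightarrow> mono t \<Longrightarrow> wf_typ G t \<Longrightarrow>
               wf_ctx (G @ [CSolved a t])"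
| wfc_marker: "wf_ctx G \<Longrightarrow> a \<notin> evars G \<Longrightarrow> a \<notin> markers G \<Longrightarrow>
               wf_ctx (G @ [CMarker a])"

definition decl_ctx :: "ctx \<Rightarrow> bool" where
  "decl_ctx G \<longleftrightarrow> (\<forall>e \<in> set G. (\<exists>a. e = CTVar a) \<or> (\<exists>x A. e = CVar x A))"

text \<open>Context application [\<Gamma>]A: substitute solved existentials, rightmost
first, so that solutions mentioning earlier existentials are also resolved.\<close>
fun capp_rev :: "ctx \<Rightarrow> ty \<Rightarrow> ty" where
  "capp_rev [] A = A"
| "capp_rev (CSolved a t # G) A = capp_rev G (esubst a t A)"
| "capp_rev (CTVar a # G) A = capp_rev G A"
| "capp_rev (CVar x B # G) A = capp_rev G A"
| "capp_rev (CEVar a # G) A = capp_rev G A"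
| "capp_rev (CMarker a # G) A = capp_rev G A"

definition capp :: "ctx \<Rightarrow> ty \<Rightarrow> ty" where
  "capp G A = capp_rev (rev G) A"

inductive dsub :: "ctx \<Rightarrow> ty \<Rightarrow> ty \<Rightarrow> bool" where
  ds_var: "CTVar a \<in> set P \<Longrightarrow> dsub P (TVar a) (TVar a)"
| ds_unit: "dsub P TUnit TUnit"
| ds_arr: "dsub P B1 A1 \<Longrightarrow> dsub P A2 B2 \<Longrightarrow> dsub P (TArr A1 A2) (TArr B1 B2)"
| ds_allL: "mono t \<Longrightarrow> wf_typ P t \<Longrightarrow> dsub P (open_typ A t) B \<Longrightarrow> dsub P (TAll A) B"
| ds_allR: "b \<notin> tvars P \<Longrightarrow> b \<notin> ftv A \<Longrightarrow> b \<notin> ftv B \<Longrightarrow>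
            dsub (P @ [CTVar b]) A (open_typ B (TVar b)) \<Longrightarrow> dsub P A (TAll B)"

inductive instL :: "ctx \<Rightarrow> nat \<Rightarrow> ty \<Rightarrow> ctx \<Rightarrow> bool"
  and instR :: "ctx \<Rightarrow> ty \<Rightarrow> nat \<Rightarrow> ctx \<Rightarrow> bool" where
  instL_solve: "mono t \<Longrightarrow> wf_typ G1 t \<Longrightarrow>
      instL (G1 @ [CEVar a] @ G2) a t (G1 @ [CSolved a t] @ G2)"
| instL_reach: "instL (G1 @ [CEVar a] @ G2 @ [CEVar b] @ G3) a (TEVar b)
      (G1 @ [CEVar a] @ G2 @ [CSolved b (TEVar a)] @ G3)"
| instL_arr: "a1 \<noteq> a2 \<Longrightarrow> a1 \<notin> evars (G1 @ [CEVar a] @ G2) \<union> markers (G1 @ [CEVar a] @ G2) \<Longrightarrow>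
      a2 \<notin> evars (G1 @ [CEVar a] @ G2) \<union> markers (G1 @ [CEVar a] @ G2) \<Longrightarrow>
      a1 \<notin> fev A1 \<union> fev A2 \<Longrightarrow> a2 \<notin> fev A1 \<union> fev A2 \<Longrightarrow>
      instR (G1 @ [CEVar a2, CEVar a1, CSolved a (TArr (TEVar a1) (TEVar a2))] @ G2) A1 a1 T \<Longrightarrow>
      instL T a2 (capp T A2) D \<Longrightarrow>
      instL (G1 @ [CEVar a] @ G2) a (TArr A1 A2) D"
| instL_allR: "CEVar a \<in> set G \<Longrightarrow> b \<notin> tvars G \<Longrightarrow> b \<notin> ftv B \<Longrightarrow>
      instL (G @ [CTVar b]) a (open_typ B (TVar b)) (D @ [CTVar b] @ D') \<Longrightarrow>
      instL G a (TAll B) D"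
| instR_solve: "mono t \<Longrightarrow> wf_typ G1 t \<Longrightarrow>
      instR (G1 @ [CEVar a] @ G2) t a (G1 @ [CSolved a t] @ G2)"
| instR_reach: "instR (G1 @ [CEVar a] @ G2 @ [CEVar b] @ G3) (TEVar b) a
      (G1 @ [CEVar a] @ G2 @ [CSolved b (TEVar a)] @ G3)"
| instR_arr: "a1 \<noteq> a2 \<Longrightarrow> a1 \<notin> evars (G1 @ [CEVar a] @ G2) \<union> markers (G1 @ [CEVar a] @ G2) \<Longrightarrow>
      a2 \<notin> evars (G1 @ [CEVar a] @ G2) \<union> markers (G1 @ [CEVar a] @ G2) \<Longrightarrow>
      a1 \<notin> fev A1 \<union> fev A2 \<Longrightarrow> a2 \<notin> fev A1 \<union> fev A2 \<Longrightarrow>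
      instL (G1 @ [CEVar a2, CEVar a1, CSolved a (TArr (TEVar a1) (TEVar a2))] @ G2) a1 A1 T \<Longrightarrow>
      instR T (capp T A2) a2 D \<Longrightarrow>
      instR (G1 @ [CEVar a] @ G2) (TArr A1 A2) a D"
| instR_allL: "CEVar a \<in> set G \<Longrightarrow> b \<notin> evars G \<union> markers G \<Longrightarrow> b \<notin> fev B \<Longrightarrow>
      instR (G @ [CMarker b, CEVar b]) (open_typ B (TEVar b)) a (D @ [CMarker b] @ D') \<Longrightarrow>
      instR G (TAll B) a D"

inductive asub :: "ctx \<Rightarrow> ty \<Rightarrow> ty \<Rightarrow> ctx \<Rightarrow> bool" where
  as_var: "CTVar a \<in> set G \<Longrightarrow> asub G (TVar a) (TVar a) G"
| as_unit: "asub G TUnit TUnit G"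
| as_evar: "CEVar a \<in> set G \<Longrightarrow> asub G (TEVar a) (TEVar a) G"
| as_arr: "asub G B1 A1 T \<Longrightarrow> asub T (capp T A2) (capp T B2) D \<Longrightarrow>
      asub G (TArr A1 A2) (TArr B1 B2) D"
| as_allL: "a \<notin> evars G \<union> markers G \<Longrightarrow> a \<notin> fev A \<union> fev B \<Longrightarrow>
      asub (G @ [CMarker a, CEVar a]) (open_typ A (TEVar a)) B (D @ [CMarker a] @ T) \<Longrightarrow>
      asub G (TAll A) B D"
| as_allR: "b \<notin> tvars G \<Longrightarrow> b \<notin> ftv A \<union> ftv B \<Longrightarrow>
      asub (G @ [CTVar b]) A (open_typ B (TVar b)) (D @ [CTVar b] @ T) \<Longrightarrow>
      asub G A (TAll B) D"
| as_instL: "CEVar a \<in> set G \<Longrightarrow> a \<notin> fev A \<Longrightarrow> instL G a A D \<Longrightarrow> asub G (TEVar a) A D"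
| as_instR: "CEVar a \<in> set G \<Longrightarrow> a \<notin> fev A \<Longrightarrow> instR G A a D \<Longrightarrow> asub G A (TEVar a) D"

end

theory Submission
  imports Defs
begin

text \<open>Soundness is proved for arbitrary well-formed input contexts, by induction on the
algorithmic derivation together with the two instantiation judgements. The output context
\<open>\<Delta>\<close> is read through its ground instantiations \<open>\<theta>\<close>, the complete contexts of the paper:
\<open>\<theta>\<close> sends every existential of \<open>\<Delta>\<close> to a monotype over the universal variables of \<open>\<Delta>\<close>
and respects the solutions recorded in \<open>\<Delta>\<close>. The invariant is that every such \<open>\<theta>\<close> turns
\<open>A <: B\<close> into a declarative judgement \<open>\<theta>A \<le> \<theta>B\<close>. Output contexts extend input contexts,
so an instantiation of a later context also instantiates the earlier ones; in the quantifier
rules an instantiation of the truncated output is extended across the entries that were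
dropped after the fresh variable. A declarative context has no existentials, so finally
\<open>\<theta>A = A\<close> and \<open>\<theta>B = B\<close>.\<close>

section \<open>Locally closed types\<close>

fun lc_at :: "nat \<Rightarrow> ty \<Rightarrow> bool" where
  "lc_at k TUnit = True"
| "lc_at k (TBVar i) = (i < k)"
| "lc_at k (TVar a) = True"
| "lc_at k (TEVar a) = True"
| "lc_at k (TAll A) = lc_at (Suc k) A"
| "lc_at k (TArr A B) = (lc_at k A \<and> lc_at k B)"

lemma lc_at_le: "lc_at k A \<Longrightarrow> k \<le> j \<Longrightarrow> lc_at j A"
  by (induction A arbitrary: k j) auto

lemma lc_at_open_rec: "lc_at (Suc k) A \<Longrightarrow> lc_at k u \<Longrightarrow> lc_at k (open_rec k u A)"
proof (induction A arbitrary: k u)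
  case (TAll A)
  then show ?case using lc_at_le[of k u "Suc k"] by auto
qed auto

lemma lc_at_open_recD: "lc_at k (open_rec k u A) \<Longrightarrow> lc_at (Suc k) A"
  by (induction A arbitrary: k) (auto split: if_splits)

lemma ftv_subset_open_rec: "ftv A \<subseteq> ftv (open_rec k u A)"
  by (induction A arbitrary: k) auto

lemma ftv_open_rec_subset: "ftv (open_rec k u A) \<subseteq> ftv A \<union> ftv u"
  by (induction A arbitrary: k) auto

lemma fev_subset_open_rec: "fev A \<subseteq> fev (open_rec k u A)"
  by (induction A arbitrary: k) auto

lemma fev_open_rec_subset: "fev (open_rec k u A) \<subseteq> fev A \<union> fev u"
  by (induction A arbitrary: k) auto

lemma size_open_rec_TVar [simp]: "size (open_rec k (TVar a) A) = size A"
  by (induction A arbitrary: k) auto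

lemma lc_at_mono: "mono t \<Longrightarrow> lc_at k t"
  by (induction t) auto

lemma open_rec_mono: "mono t \<Longrightarrow> open_rec k u t = t"
  by (induction t) auto

lemma finite_ftv: "finite (ftv A)"
  by (induction A) auto

lemma finite_tvars: "finite (tvars G)"
proof -
  have "tvars G = CTVar -` set G"
    by (auto simp: tvars_def)
  then show ?thesis
    by (simp add: finite_vimageI inj_def)
qed

lemma wf_typ_imp_closed: "wf_typ G A \<Longrightarrow> lc_at 0 A \<and> ftv A \<subseteq> tvars G \<and> fev A \<subseteq> evars G"
proof (induction rule: wf_typ.induct)
  case (wf_all a G A)
  have "evars (G @ [CTVar a]) = evars G" "tvars (G @ [CTVar a]) = insert a (tvars G)"
    by (auto simp: evars_def tvars_def)
  with wf_all show ?case
    using lc_at_open_recD[of 0 "TVar a" A] ftv_subset_open_rec[of A 0 "TVar a"]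
      fev_subset_open_rec[of A 0 "TVar a"]
    by (auto simp: open_typ_def)
qed auto

lemma closed_imp_wf_typ: "lc_at 0 A \<Longrightarrow> ftv A \<subseteq> tvars G \<Longrightarrow> fev A \<subseteq> evars G \<Longrightarrow> wf_typ G A"
proof (induction A arbitrary: G rule: measure_induct_rule[of size])
  case (less A)
  show ?case
  proof (cases A)
    case (TAll B)
    have "finite (tvars G \<union> ftv B)"
      using finite_ftv finite_tvars by simp
    then obtain a where a: "a \<notin> tvars G \<union> ftv B"
      using ex_new_if_finite[OF infinite_UNIV_nat] by blast
    have "evars (G @ [CTVar a]) = evars G" "tvars (G @ [CTVar a]) = insert a (tvars G)"
      by (auto simp: evars_def tvars_def)
    then have "wf_typ (G @ [CTVar a]) (open_rec 0 (TVar a) B)"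
      using less TAll lc_at_open_rec[of 0 B "TVar a"] ftv_open_rec_subset[of 0 "TVar a" B]
        fev_open_rec_subset[of 0 "TVar a" B]
      by (intro less.IH) auto
    with TAll a show ?thesis
      by (auto intro!: wf_all simp: open_typ_def)
  qed (use less in \<open>auto intro: wf_typ.intros simp: tvars_def\<close>)
qed

lemma wf_typ_iff: "wf_typ G A \<longleftrightarrow> lc_at 0 A \<and> ftv A \<subseteq> tvars G \<and> fev A \<subseteq> evars G"
  using wf_typ_imp_closed closed_imp_wf_typ by blast

lemma wf_typ_weaken:
  "wf_typ G A \<Longrightarrow> tvars G \<subseteq> tvars G' \<Longrightarrow> evars G \<subseteq> evars G' \<Longrightarrow> wf_typ G' A"
  unfolding wf_typ_iff by blast

lemma wf_typ_open: "wf_typ G (TAll B) \<Longrightarrow> wf_typ G u \<Longrightarrow> wf_typ G (open_typ B u)"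
  unfolding wf_typ_iff open_typ_def
  using lc_at_open_rec[of 0 B u] ftv_open_rec_subset[of 0 u B] fev_open_rec_subset[of 0 u B] by auto

lemma wf_typ_TArr [simp]: "wf_typ G (TArr A B) \<longleftrightarrow> wf_typ G A \<and> wf_typ G B"
  by (auto simp: wf_typ_iff)

section \<open>Substituting existential variables\<close>

fun tsub :: "(nat \<Rightarrow> ty) \<Rightarrow> ty \<Rightarrow> ty" where
  "tsub \<theta> TUnit = TUnit"
| "tsub \<theta> (TBVar i) = TBVar i"
| "tsub \<theta> (TVar a) = TVar a"
| "tsub \<theta> (TEVar a) = \<theta> a"
| "tsub \<theta> (TAll A) = TAll (tsub \<theta> A)"
| "tsub \<theta> (TArr A B) = TArr (tsub \<theta> A) (tsub \<theta> B)"

lemma tsub_open_rec: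
  "\<forall>c\<in>fev A. mono (\<theta> c) \<Longrightarrow> tsub \<theta> (open_rec k u A) = open_rec k (tsub \<theta> u) (tsub \<theta> A)"
  by (induction A arbitrary: k) (auto simp: open_rec_mono)

lemma tsub_cong: "\<forall>c\<in>fev A. \<theta> c = \<theta>' c \<Longrightarrow> tsub \<theta> A = tsub \<theta>' A"
  by (induction A) auto

lemma tsub_no_fev: "fev A = {} \<Longrightarrow> tsub \<theta> A = A"
  by (induction A) auto

lemma fev_tsub: "\<forall>c\<in>fev A. fev (\<theta> c) = {} \<Longrightarrow> fev (tsub \<theta> A) = {}"
  by (induction A) auto

lemma ftv_tsub: "ftv (tsub \<theta> A) \<subseteq> ftv A \<union> (\<Union>c\<in>fev A. ftv (\<theta> c))"
  by (induction A) auto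

lemma mono_tsub: "mono A \<Longrightarrow> \<forall>c\<in>fev A. mono (\<theta> c) \<Longrightarrow> mono (tsub \<theta> A)"
  by (induction A) auto

lemma tsub_esubst: "\<theta> a = tsub \<theta> t \<Longrightarrow> tsub \<theta> (esubst a t A) = tsub \<theta> A"
  by (induction A) auto

lemma esubst_closed:
  "lc_at k A \<Longrightarrow> mono t \<Longrightarrow> lc_at k (esubst a t A)"
  "ftv (esubst a t A) \<subseteq> ftv A \<union> ftv t"
  "fev (esubst a t A) \<subseteq> fev A \<union> fev t"
  by (induction A arbitrary: k) (auto simp: lc_at_mono)

lemma tsub_capp_rev:
  "\<forall>c t. CSolved c t \<in> set R \<longrightarrow> \<theta> c = tsub \<theta> t \<Longrightarrow> tsub \<theta> (capp_rev R A) = tsub \<theta> A"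
  by (induction R A rule: capp_rev.induct) (auto simp: tsub_esubst)

lemma capp_rev_closed:
  assumes "\<forall>c t. CSolved c t \<in> set R \<longrightarrow> mono t \<and> ftv t \<subseteq> S \<and> fev t \<subseteq> E"
    and "lc_at 0 A" "ftv A \<subseteq> S" "fev A \<subseteq> E"
  shows "lc_at 0 (capp_rev R A) \<and> ftv (capp_rev R A) \<subseteq> S \<and> fev (capp_rev R A) \<subseteq> E"
  using assms
proof (induction R A rule: capp_rev.induct)
  case (2 a t G A)
  have t: "mono t" "ftv t \<subseteq> S" "fev t \<subseteq> E"
    using "2.prems"(1) by auto
  have "lc_at 0 (esubst a t A)"
    using esubst_closed(1)[OF "2.prems"(2) t(1)] .
  moreover have "ftv (esubst a t A) \<subseteq> S" "fev (esubst a t A) \<subseteq> E"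
    using esubst_closed(2,3)[of a t A] "2.prems"(3,4) t(2,3) by blast+
  ultimately show ?case
    using "2.IH" "2.prems"(1) by simp
qed auto

section \<open>Well-formed contexts\<close>

lemma tvars_simps [simp]:
  "tvars [] = {}" "tvars (G @ H) = tvars G \<union> tvars H"
  "tvars (e # G) = (case e of CTVar a \<Rightarrow> insert a (tvars G) | _ \<Rightarrow> tvars G)"
  by (auto simp: tvars_def split: centry.splits)

lemma evars_simps [simp]:
  "evars [] = {}" "evars (G @ H) = evars G \<union> evars H"
  "evars (e # G) = (case e of CEVar a \<Rightarrow> insert a (evars G) | CSolved a t \<Rightarrow> insert a (evars G)
     | _ \<Rightarrow> evars G)"
  by (auto simp: evars_def split: centry.splits)

lemma markers_simps [simp]:
  "markers [] = {}" "markers (G @ H) = markers G \<union> markers H"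
  "markers (e # G) = (case e of CMarker a \<Rightarrow> insert a (markers G) | _ \<Rightarrow> markers G)"
  by (auto simp: markers_def split: centry.splits)

lemma vars_simps [simp]:
  "vars [] = {}" "vars (G @ H) = vars G \<union> vars H"
  "vars (e # G) = (case e of CVar x A \<Rightarrow> insert x (vars G) | _ \<Rightarrow> vars G)"
  by (auto simp: vars_def split: centry.splits)

lemma wf_typ_open_TVar:
  "wf_typ G (TAll B) \<Longrightarrow> wf_typ (G @ [CTVar b]) (open_typ B (TVar b))"
  by (rule wf_typ_open) (auto intro: wf_typ_weaken wf_tvar simp: tvars_def)

lemma wf_typ_open_TEVar:
  "wf_typ G (TAll B) \<Longrightarrow> wf_typ (G @ [CMarker a, CEVar a]) (open_typ B (TEVar a))"
  by (rule wf_typ_open) (auto intro: wf_typ_weaken wf_evar simp: evars_def)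

fun wf_entry :: "ctx \<Rightarrow> centry \<Rightarrow> bool" where
  "wf_entry G (CTVar a) \<longleftrightarrow> a \<notin> tvars G"
| "wf_entry G (CVar x A) \<longleftrightarrow> x \<notin> vars G \<and> wf_typ G A"
| "wf_entry G (CEVar a) \<longleftrightarrow> a \<notin> evars G"
| "wf_entry G (CSolved a t) \<longleftrightarrow> a \<notin> evars G \<and> mono t \<and> wf_typ G t"
| "wf_entry G (CMarker a) \<longleftrightarrow> a \<notin> evars G \<and> a \<notin> markers G"

lemma wf_ctx_snoc: "wf_ctx (G @ [e]) \<longleftrightarrow> wf_ctx G \<and> wf_entry G e"
proof
  show "wf_ctx (G @ [e]) \<Longrightarrow> wf_ctx G \<and> wf_entry G e"
    by (cases rule: wf_ctx.cases) auto
  show "wf_ctx G \<and> wf_entry G e \<Longrightarrow> wf_ctx (G @ [e])"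
    by (cases e) (auto intro: wf_ctx.intros)
qed

lemma wf_ctx_appendD: "wf_ctx (G @ X) \<Longrightarrow> wf_ctx G"
  by (induction X rule: rev_induct) (auto simp: wf_ctx_snoc simp flip: append_assoc)

lemma wf_ctx_distinct: "wf_ctx G \<Longrightarrow> distinct G"
  by (induction rule: wf_ctx.induct) (auto simp: tvars_def vars_def evars_def markers_def)

lemma wf_ctx_solved:
  "wf_ctx G \<Longrightarrow> CSolved c t \<in> set G \<Longrightarrow> mono t \<and> ftv t \<subseteq> tvars G \<and> fev t \<subseteq> evars G"
  by (induction G rule: rev_induct) (auto simp: wf_ctx_snoc wf_typ_iff elim: wf_entry.elims)

lemma capp_wf: "wf_ctx G \<Longrightarrow> wf_typ G A \<Longrightarrow> wf_typ G (capp G A)"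
  unfolding capp_def wf_typ_iff
  by (rule capp_rev_closed) (use wf_ctx_solved in auto)

lemma wf_ctx_replace_prefix:
  assumes "wf_ctx (G @ X)" "wf_ctx G'"
    and "tvars G' = tvars G" "evars G \<subseteq> evars G'" "markers G' = markers G" "vars G' = vars G"
    and "(evars G' - evars G) \<inter> (evars X \<union> markers X) = {}"
  shows "wf_ctx (G' @ X)"
  using assms
proof (induction X rule: rev_induct)
  case (snoc x X)
  then have "wf_ctx (G @ X)" "wf_entry (G @ X) x"
    by (simp_all add: wf_ctx_snoc flip: append_assoc)
  moreover from this have "wf_entry (G' @ X) x"
    using snoc.prems by (cases x) (auto simp: wf_typ_iff)
  moreover have "(evars G' - evars G) \<inter> (evars X \<union> markers X) = {}"
    using snoc.prems(7) by auto
  ultimately show ?case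
    using snoc by (auto simp: wf_ctx_snoc simp flip: append_assoc)
qed simp

lemma wf_ctx_solve:
  assumes "wf_ctx (G1 @ [CEVar a] @ G2)" "mono t" "wf_typ G1 t"
  shows "wf_ctx (G1 @ [CSolved a t] @ G2)"
proof -
  have "wf_ctx (G1 @ [CEVar a])"
    using wf_ctx_appendD[of "G1 @ [CEVar a]" G2] assms(1) by simp
  with assms(2,3) have "wf_ctx (G1 @ [CSolved a t])"
    by (simp add: wf_ctx_snoc)
  with assms(1) show ?thesis
    using wf_ctx_replace_prefix[of "G1 @ [CEVar a]" G2 "G1 @ [CSolved a t]"] by simp
qed

lemma wf_ctx_split_arrow:
  assumes "wf_ctx (G1 @ [CEVar a] @ G2)" "a1 \<noteq> a2"
    and "a1 \<notin> evars (G1 @ [CEVar a] @ G2) \<union> markers (G1 @ [CEVar a] @ G2)"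
    and "a2 \<notin> evars (G1 @ [CEVar a] @ G2) \<union> markers (G1 @ [CEVar a] @ G2)"
  shows "wf_ctx (G1 @ [CEVar a2, CEVar a1, CSolved a (TArr (TEVar a1) (TEVar a2))] @ G2)"
proof -
  have "wf_ctx (G1 @ [CEVar a])"
    using wf_ctx_appendD[of "G1 @ [CEVar a]" G2] assms(1) by simp
  then have "wf_ctx (((G1 @ [CEVar a2]) @ [CEVar a1]) @ [CSolved a (TArr (TEVar a1) (TEVar a2))])"
    using assms(2-4) by (simp only: wf_ctx_snoc) (simp add: wf_typ_iff)
  with assms show ?thesis
    using wf_ctx_replace_prefix[of "G1 @ [CEVar a]" G2
        "G1 @ [CEVar a2, CEVar a1, CSolved a (TArr (TEVar a1) (TEVar a2))]"]
    by auto
qed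

lemma wf_ctx_marker_evar:
  "wf_ctx G \<Longrightarrow> a \<notin> evars G \<union> markers G \<Longrightarrow> wf_ctx (G @ [CMarker a, CEVar a])"
  using wf_ctx_snoc[of "G @ [CMarker a]" "CEVar a"] by (simp add: wf_ctx_snoc)

section \<open>Ground instantiations\<close>

definition ground_mono :: "nat set \<Rightarrow> ty \<Rightarrow> bool" where
  "ground_mono S u \<longleftrightarrow> mono u \<and> fev u = {} \<and> ftv u \<subseteq> S"

definition ground_inst :: "ctx \<Rightarrow> (nat \<Rightarrow> ty) \<Rightarrow> bool" where
  "ground_inst G \<theta> \<longleftrightarrow> (\<forall>a\<in>evars G. ground_mono (tvars G) (\<theta> a))
     \<and> (\<forall>a t. CSolved a t \<in> set G \<longrightarrow> \<theta> a = tsub \<theta> t)"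

lemma ground_mono_wf_typ: "ground_mono (tvars P) t \<Longrightarrow> wf_typ P t"
  by (auto simp: ground_mono_def wf_typ_iff lc_at_mono)

lemma ground_mono_tsub:
  assumes "mono A" "ftv A \<subseteq> S" "\<forall>c\<in>fev A. ground_mono S (\<theta> c)"
  shows "ground_mono S (tsub \<theta> A)"
proof -
  have "(\<Union>c\<in>fev A. ftv (\<theta> c)) \<subseteq> S"
    using assms(3) by (auto simp: ground_mono_def)
  then have "ftv (tsub \<theta> A) \<subseteq> S"
    using ftv_tsub[of \<theta> A] assms(2) by blast
  with assms show ?thesis
    by (auto simp: ground_mono_def intro!: mono_tsub fev_tsub)
qed

lemma ground_inst_evar: "ground_inst G \<theta> \<Longrightarrow> a \<in> evars G \<Longrightarrow> ground_mono (tvars G) (\<theta> a)"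
  by (simp add: ground_inst_def)

lemma ground_inst_solved: "ground_inst G \<theta> \<Longrightarrow> CSolved a t \<in> set G \<Longrightarrow> \<theta> a = tsub \<theta> t"
  by (simp add: ground_inst_def)

lemma ground_inst_mono: "ground_inst G \<theta> \<Longrightarrow> fev A \<subseteq> evars G \<Longrightarrow> \<forall>c\<in>fev A. mono (\<theta> c)"
  by (auto simp: ground_inst_def ground_mono_def)

lemma tsub_open_typ:
  "ground_inst G \<theta> \<Longrightarrow> fev B \<subseteq> evars G \<Longrightarrow> tsub \<theta> (open_typ B u) = open_typ (tsub \<theta> B) (tsub \<theta> u)"
  unfolding open_typ_def by (intro tsub_open_rec ground_inst_mono)

lemma ftv_tsub_ground:
  "ground_inst G \<theta> \<Longrightarrow> fev A \<subseteq> evars G \<Longrightarrow> ftv (tsub \<theta> A) \<subseteq> ftv A \<union> tvars G"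
  using ftv_tsub[of \<theta> A] by (fastforce simp: ground_inst_def ground_mono_def)

lemma tsub_capp: "ground_inst G \<theta> \<Longrightarrow> tsub \<theta> (capp G A) = tsub \<theta> A"
  unfolding capp_def by (rule tsub_capp_rev) (simp add: ground_inst_def)

lemma ground_inst_cong:
  assumes "wf_ctx G" "ground_inst G \<theta>" "\<forall>c\<in>evars G. \<theta>' c = \<theta> c"
  shows "ground_inst G \<theta>'"
  unfolding ground_inst_def
proof (intro conjI ballI allI impI)
  fix a assume "a \<in> evars G"
  then show "ground_mono (tvars G) (\<theta>' a)"
    using assms(2,3) by (simp add: ground_inst_def)
next
  fix a t assume solved: "CSolved a t \<in> set G"
  then have "a \<in> evars G" "fev t \<subseteq> evars G"
    using wf_ctx_solved[OF assms(1)] by (auto simp: evars_def)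
  moreover from this have "tsub \<theta> t = tsub \<theta>' t"
    using assms(3) by (intro tsub_cong) auto
  ultimately show "\<theta>' a = tsub \<theta>' t"
    using assms(3) ground_inst_solved[OF assms(2) solved] by auto
qed

lemma ground_inst_snoc:
  assumes "wf_ctx (G @ [e])" "ground_inst G \<theta>"
  shows "\<exists>\<theta>'. ground_inst (G @ [e]) \<theta>' \<and> (\<forall>c\<in>evars G. \<theta>' c = \<theta> c)"
proof (cases e)
  case (CTVar b)
  then show ?thesis
    using assms(2) by (intro exI[of _ \<theta>]) (auto simp: ground_inst_def ground_mono_def)
next
  case (CEVar a)
  let ?\<theta>' = "\<theta>(a := TUnit)"
  have fresh: "a \<notin> evars G"
    using assms(1) CEVar by (simp add: wf_ctx_snoc)
  then have "ground_inst G ?\<theta>'"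
    using ground_inst_cong[OF wf_ctx_appendD[OF assms(1)] assms(2)] by auto
  with CEVar fresh show ?thesis
    by (intro exI[of _ ?\<theta>']) (auto simp: ground_inst_def ground_mono_def)
next
  case (CSolved a t)
  let ?\<theta>' = "\<theta>(a := tsub \<theta> t)"
  have entry: "a \<notin> evars G" "mono t" "ftv t \<subseteq> tvars G" "fev t \<subseteq> evars G"
    using assms(1) CSolved by (auto simp: wf_ctx_snoc wf_typ_iff)
  then have "ground_inst G ?\<theta>'"
    using ground_inst_cong[OF wf_ctx_appendD[OF assms(1)] assms(2)] by auto
  moreover have "tsub ?\<theta>' t = tsub \<theta> t"
    using entry by (intro tsub_cong) auto
  moreover have "ground_mono (tvars G) (tsub \<theta> t)"
    using entry assms(2) by (intro ground_mono_tsub) (auto simp: ground_inst_def)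
  ultimately show ?thesis
    using CSolved entry by (intro exI[of _ ?\<theta>']) (auto simp: ground_inst_def)
qed (use assms(2) in \<open>auto simp: ground_inst_def intro!: exI[of _ \<theta>]\<close>)

lemma ground_inst_extend:
  "wf_ctx (G @ X) \<Longrightarrow> ground_inst G \<theta> \<Longrightarrow> \<exists>\<theta>'. ground_inst (G @ X) \<theta>' \<and> (\<forall>c\<in>evars G. \<theta>' c = \<theta> c)"
proof (induction X rule: rev_induct)
  case (snoc e X)
  then obtain \<theta>1 where "ground_inst (G @ X) \<theta>1" "\<forall>c\<in>evars G. \<theta>1 c = \<theta> c"
    using wf_ctx_appendD[of "G @ X" "[e]"] by auto
  moreover obtain \<theta>2 where "ground_inst (G @ X @ [e]) \<theta>2" "\<forall>c\<in>evars (G @ X). \<theta>2 c = \<theta>1 c"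
    using ground_inst_snoc[of "G @ X" e \<theta>1] snoc.prems(1) calculation(1) by auto
  ultimately show ?case
    by auto
qed auto

section \<open>Context extension\<close>

text \<open>The paper's context extension, restricted to what algorithmic subtyping does to a
context: solving existentials and adding new ones.\<close>

inductive ctx_ext :: "ctx \<Rightarrow> ctx \<Rightarrow> bool" where
  ext_nil: "ctx_ext [] []"
| ext_keep: "ctx_ext G D \<Longrightarrow> ctx_ext (G @ [e]) (D @ [e])"
| ext_solve: "ctx_ext G D \<Longrightarrow> ctx_ext (G @ [CEVar a]) (D @ [CSolved a t])"
| ext_add_evar: "ctx_ext G D \<Longrightarrow> ctx_ext G (D @ [CEVar a])"
| ext_add_solved: "ctx_ext G D \<Longrightarrow> ctx_ext G (D @ [CSolved a t])"

lemma ctx_ext_refl: "ctx_ext G G"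
  by (induction G rule: rev_induct) (auto intro: ctx_ext.intros)

lemma ctx_ext_append: "ctx_ext G D \<Longrightarrow> ctx_ext (G @ X) (D @ X)"
proof (induction X rule: rev_induct)
  case (snoc x X)
  then show ?case
    using ext_keep[of "G @ X" "D @ X" x] by simp
qed simp

lemma ctx_ext_tvars: "ctx_ext G D \<Longrightarrow> tvars D = tvars G"
  by (induction rule: ctx_ext.induct) auto

lemma ctx_ext_evars: "ctx_ext G D \<Longrightarrow> evars G \<subseteq> evars D"
  by (induction rule: ctx_ext.induct) (auto split: centry.splits)

lemma ctx_ext_solved: "ctx_ext G D \<Longrightarrow> CSolved a t \<in> set G \<Longrightarrow> CSolved a t \<in> set D"
  by (induction rule: ctx_ext.induct) auto

lemma ctx_ext_ground_inst:
  assumes "ctx_ext G D" "ground_inst D \<theta>"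
  shows "ground_inst G \<theta>"
  using assms(2) ctx_ext_tvars[OF assms(1)] ctx_ext_evars[OF assms(1)] ctx_ext_solved[OF assms(1)]
  by (auto simp: ground_inst_def)

lemma ctx_ext_snocE:
  assumes "ctx_ext G (D @ [e])"
  obtains G' where "G = G' @ [e]" "ctx_ext G' D"
  | G' a t where "e = CSolved a t" "G = G' @ [CEVar a]" "ctx_ext G' D"
  | "\<exists>a. e = CEVar a \<or> (\<exists>t. e = CSolved a t)" "ctx_ext G D"
  using assms by (cases rule: ctx_ext.cases) auto

lemma ctx_ext_trans: "ctx_ext D E \<Longrightarrow> ctx_ext G D \<Longrightarrow> ctx_ext G E"
proof (induction D E arbitrary: G rule: ctx_ext.induct)
  case (ext_keep D E e)
  from ext_keep.prems show ?case
    by (cases rule: ctx_ext_snocE) (auto intro: ctx_ext.intros ext_keep.IH)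
next
  case (ext_solve D E a t)
  from ext_solve.prems show ?case
    by (cases rule: ctx_ext_snocE) (auto intro: ctx_ext.intros ext_solve.IH)
qed (auto intro: ctx_ext.intros)

lemma ctx_ext_wf_typ: "ctx_ext G D \<Longrightarrow> wf_typ G A \<Longrightarrow> wf_typ D A"
  using wf_typ_weaken[of G A D] ctx_ext_tvars[of G D] ctx_ext_evars[of G D] by simp

lemma ctx_ext_solve: "ctx_ext (G1 @ [CEVar a] @ G2) (G1 @ [CSolved a t] @ G2)"
  using ctx_ext_append[where X = G2, OF ext_solve[where a = a and t = t, OF ctx_ext_refl[of G1]]]
  by simp

lemma ctx_ext_split_arrow:
  "ctx_ext (G1 @ [CEVar a] @ G2) (G1 @ [CEVar a2, CEVar a1, CSolved a t] @ G2)"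
  using ctx_ext_append[where X = G2, OF ext_solve[where a = a and t = t,
        OF ext_add_evar[where a = a1, OF ext_add_evar[where a = a2, OF ctx_ext_refl[of G1]]]]]
  by simp

lemma ctx_ext_split:
  "ctx_ext G' X \<Longrightarrow> G' = G @ [e] @ R \<Longrightarrow> \<forall>x\<in>set R. \<exists>c. x = CEVar c \<Longrightarrow> \<forall>c. e \<noteq> CEVar c
    \<Longrightarrow> \<exists>D T. X = D @ [e] @ T \<and> ctx_ext G D"
proof (induction arbitrary: R rule: ctx_ext.induct)
  case (ext_keep G1 D e')
  show ?case
  proof (cases R rule: rev_cases)
    case Nil
    with ext_keep.prems show ?thesis
      using ext_keep.hyps by auto
  next
    case (snoc R' y)
    with ext_keep obtain D1 T where "D = D1 @ [e] @ T" "ctx_ext G D1"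
      by fastforce
    then show ?thesis
      by (intro exI[of _ D1] exI[of _ "T @ [e']"]) auto
  qed
next
  case (ext_solve G1 D a t)
  then obtain R' where "R = R' @ [CEVar a]"
    by (cases R rule: rev_cases) auto
  with ext_solve obtain D1 T where "D = D1 @ [e] @ T" "ctx_ext G D1"
    by fastforce
  then show ?case
    by (intro exI[of _ D1] exI[of _ "T @ [CSolved a t]"]) auto
next
  case (ext_add_evar G1 D a)
  then obtain D1 T where "D = D1 @ [e] @ T" "ctx_ext G D1"
    by blast
  then show ?case
    by (intro exI[of _ D1] exI[of _ "T @ [CEVar a]"]) auto
next
  case (ext_add_solved G1 D a t)
  then obtain D1 T where "D = D1 @ [e] @ T" "ctx_ext G D1"
    by blast
  then show ?case
    by (intro exI[of _ D1] exI[of _ "T @ [CSolved a t]"]) auto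
qed simp

lemma ctx_ext_cut:
  assumes "ctx_ext (G @ [e] @ R) (D @ [e] @ T)" "wf_ctx (D @ [e] @ T)"
    and "\<forall>x\<in>set R. \<exists>c. x = CEVar c" "\<forall>c. e \<noteq> CEVar c"
  shows "ctx_ext G D"
proof -
  obtain D' T' where eq: "D @ [e] @ T = D' @ [e] @ T'" and ext: "ctx_ext G D'"
    using ctx_ext_split[OF assms(1) refl assms(3,4)] by blast
  have "distinct (D @ [e] @ T)"
    using wf_ctx_distinct[OF assms(2)] .
  moreover from this have "distinct (D' @ [e] @ T')"
    by (simp only: eq)
  ultimately have "D' = D"
    using append_Cons_eq_iff[of e D' T' D T] eq by auto
  with ext show ?thesis
    by simp
qed

section \<open>Soundness\<close>

lemma dsub_refl: "mono t \<Longrightarrow> fev t = {} \<Longrightarrow> ftv t \<subseteq> tvars P \<Longrightarrow> dsub P t t"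
  by (induction t) (auto intro: dsub.intros simp: tvars_def)

text \<open>Declarative subtyping consults its context only for the universal variables, hence the
quantification over all contexts \<open>P\<close> with the universal variables of \<open>D\<close>.\<close>

definition dsub_ground :: "ctx \<Rightarrow> ty \<Rightarrow> ty \<Rightarrow> bool" where
  "dsub_ground D A B \<longleftrightarrow>
     (\<forall>P \<theta>. tvars P = tvars D \<longrightarrow> ground_inst D \<theta> \<longrightarrow> dsub P (tsub \<theta> A) (tsub \<theta> B))"

lemma dsub_ground_cong:
  assumes "dsub_ground D A' B'"
    and "\<And>\<theta>. ground_inst D \<theta> \<Longrightarrow> tsub \<theta> A = tsub \<theta> A'"
    and "\<And>\<theta>. ground_inst D \<theta> \<Longrightarrow> tsub \<theta> B = tsub \<theta> B'"
  shows "dsub_ground D A B"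
  using assms by (simp add: dsub_ground_def)

lemma dsub_ground_capp:
  assumes "ctx_ext T D"
  shows "dsub_ground D (capp T A) B \<longleftrightarrow> dsub_ground D A B"
    and "dsub_ground D A (capp T B) \<longleftrightarrow> dsub_ground D A B"
  using tsub_capp[OF ctx_ext_ground_inst[OF assms]] by (simp_all add: dsub_ground_def)

lemma dsub_ground_refl:
  assumes "mono A" "wf_typ D A"
  shows "dsub_ground D A A"
  unfolding dsub_ground_def
proof (intro allI impI)
  fix P \<theta> assume "tvars P = tvars D" "ground_inst D \<theta>"
  with assms have "ground_mono (tvars P) (tsub \<theta> A)"
    by (intro ground_mono_tsub) (auto simp: wf_typ_iff ground_inst_def)
  then show "dsub P (tsub \<theta> A) (tsub \<theta> A)"
    by (auto simp: ground_mono_def intro: dsub_refl)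
qed

lemma dsub_ground_solved:
  assumes "CSolved a t \<in> set D"
  shows "dsub_ground D (TEVar a) t" and "dsub_ground D t (TEVar a)"
proof -
  have refl: "dsub_ground D (TEVar a) (TEVar a)"
    using assms by (intro dsub_ground_refl) (auto simp: wf_typ_iff evars_def)
  then show "dsub_ground D (TEVar a) t"
    by (rule dsub_ground_cong) (simp_all add: ground_inst_solved[OF _ assms])
  from refl show "dsub_ground D t (TEVar a)"
    by (rule dsub_ground_cong) (simp_all add: ground_inst_solved[OF _ assms])
qed

lemma dsub_ground_arr:
  assumes "ctx_ext T D" "dsub_ground T B1 A1" "dsub_ground D A2 B2"
  shows "dsub_ground D (TArr A1 A2) (TArr B1 B2)"
  using assms ctx_ext_ground_inst[OF assms(1)] ctx_ext_tvars[OF assms(1)]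
  by (auto simp: dsub_ground_def intro: ds_arr)

lemma dsub_ground_allR:
  assumes wf: "wf_ctx (D @ [CTVar b] @ T)"
    and ext: "ctx_ext G D" "ctx_ext (G @ [CTVar b]) (D @ [CTVar b] @ T)"
    and wf_A: "wf_typ G A" and wf_B: "wf_typ G (TAll B)" and fresh: "b \<notin> tvars G"
    and sub: "dsub_ground (D @ [CTVar b] @ T) A (open_typ B (TVar b))"
  shows "dsub_ground D A (TAll B)"
  unfolding dsub_ground_def
proof (intro allI impI)
  fix P \<theta> assume P: "tvars P = tvars D" and \<theta>: "ground_inst D \<theta>"
  obtain \<theta>' where \<theta>': "ground_inst (D @ [CTVar b] @ T) \<theta>'" and agree: "\<forall>c\<in>evars D. \<theta>' c = \<theta> c"
    using ground_inst_extend[OF wf \<theta>] by blast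
  have tvars_D: "tvars D = tvars G"
    using ctx_ext_tvars[OF ext(1)] .
  have fev: "fev A \<subseteq> evars D" "fev B \<subseteq> evars D"
    using wf_A wf_B ctx_ext_evars[OF ext(1)] by (auto simp: wf_typ_iff)
  have "dsub (P @ [CTVar b]) (tsub \<theta>' A) (tsub \<theta>' (open_typ B (TVar b)))"
    using sub \<theta>' P tvars_D ctx_ext_tvars[OF ext(2)] by (simp add: dsub_ground_def)
  moreover have "tsub \<theta>' A = tsub \<theta> A" "tsub \<theta>' B = tsub \<theta> B"
    using fev agree by (auto intro!: tsub_cong)
  moreover have "tsub \<theta>' (open_typ B (TVar b)) = open_typ (tsub \<theta>' B) (TVar b)"
    using tsub_open_typ[OF \<theta>', of B "TVar b"] fev by auto
  moreover have "b \<notin> ftv (tsub \<theta> A)" "b \<notin> ftv (tsub \<theta> B)"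
    using ftv_tsub_ground[OF \<theta> fev(1)] ftv_tsub_ground[OF \<theta> fev(2)] fresh wf_A wf_B tvars_D
    by (auto simp: wf_typ_iff)
  moreover have "b \<notin> tvars P"
    using P tvars_D fresh by simp
  ultimately show "dsub P (tsub \<theta> A) (tsub \<theta> (TAll B))"
    using ds_allR[of b P "tsub \<theta> A" "tsub \<theta> B"] by simp
qed

lemma dsub_ground_allL:
  assumes wf: "wf_ctx (D @ [CMarker a] @ T)"
    and ext: "ctx_ext G D" "ctx_ext (G @ [CMarker a, CEVar a]) (D @ [CMarker a] @ T)"
    and wf_A: "wf_typ G (TAll A)" and wf_B: "wf_typ G B"
    and sub: "dsub_ground (D @ [CMarker a] @ T) (open_typ A (TEVar a)) B"
  shows "dsub_ground D (TAll A) B"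
  unfolding dsub_ground_def
proof (intro allI impI)
  fix P \<theta> assume P: "tvars P = tvars D" and \<theta>: "ground_inst D \<theta>"
  obtain \<theta>' where \<theta>': "ground_inst (D @ [CMarker a] @ T) \<theta>'" and agree: "\<forall>c\<in>evars D. \<theta>' c = \<theta> c"
    using ground_inst_extend[OF wf \<theta>] by blast
  have tvars_P: "tvars P = tvars (D @ [CMarker a] @ T)"
    using P ctx_ext_tvars[OF ext(1)] ctx_ext_tvars[OF ext(2)] by simp
  have fev: "fev A \<subseteq> evars D" "fev B \<subseteq> evars D"
    using wf_A wf_B ctx_ext_evars[OF ext(1)] by (auto simp: wf_typ_iff)
  have "dsub P (tsub \<theta>' (open_typ A (TEVar a))) (tsub \<theta>' B)"
    using sub \<theta>' tvars_P by (simp add: dsub_ground_def)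
  moreover have "tsub \<theta>' A = tsub \<theta> A" "tsub \<theta>' B = tsub \<theta> B"
    using fev agree by (auto intro!: tsub_cong)
  moreover have "tsub \<theta>' (open_typ A (TEVar a)) = open_typ (tsub \<theta>' A) (\<theta>' a)"
    using tsub_open_typ[OF \<theta>', of A "TEVar a"] fev by auto
  moreover have "ground_mono (tvars P) (\<theta>' a)"
    using ground_inst_evar[OF \<theta>'] ctx_ext_evars[OF ext(2)] tvars_P by auto
  ultimately show "dsub P (tsub \<theta> (TAll A)) (tsub \<theta> B)"
    using ds_allL[of "\<theta>' a" P "tsub \<theta> A" "tsub \<theta> B"] ground_mono_wf_typ
    by (simp add: ground_mono_def)
qed

lemma instantiation_sound:
  "instL G a A D \<Longrightarrow> wf_ctx G \<Longrightarrow> wf_typ G A \<Longrightarrow>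
     wf_ctx D \<and> ctx_ext G D \<and> dsub_ground D (TEVar a) A"
  "instR G A a D \<Longrightarrow> wf_ctx G \<Longrightarrow> wf_typ G A \<Longrightarrow>
     wf_ctx D \<and> ctx_ext G D \<and> dsub_ground D A (TEVar a)"
proof (induction rule: instL_instR.inducts)
  case (instL_solve t G1 a G2)
  then show ?case
    using wf_ctx_solve ctx_ext_solve dsub_ground_solved(1) by simp
next
  case (instL_reach G1 a G2 b G3)
  have "wf_typ (G1 @ [CEVar a] @ G2) (TEVar a)"
    by (auto intro: wf_evar simp: evars_def)
  with instL_reach show ?case
    using wf_ctx_solve[of "G1 @ [CEVar a] @ G2" b G3 "TEVar a"]
      ctx_ext_solve[of "G1 @ [CEVar a] @ G2" b G3 "TEVar a"] dsub_ground_solved(2)[of b "TEVar a"]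
    by simp
next
  case (instL_arr a1 a2 G1 a G2 A1 A2 T D)
  let ?G = "G1 @ [CEVar a] @ G2"
  let ?G' = "G1 @ [CEVar a2, CEVar a1, CSolved a (TArr (TEVar a1) (TEVar a2))] @ G2"
  have ext': "ctx_ext ?G ?G'"
    by (rule ctx_ext_split_arrow)
  have wf': "wf_ctx ?G'"
    using wf_ctx_split_arrow[OF instL_arr.prems(1) instL_arr.hyps(1-3)] .
  have "wf_typ ?G' A1"
    using instL_arr.prems(2) ctx_ext_wf_typ[OF ext'] by simp
  from instL_arr.IH(1)[OF wf' this]
  have wf_T: "wf_ctx T" and ext_T: "ctx_ext ?G' T" and sub1: "dsub_ground T A1 (TEVar a1)"
    by blast+
  have ext_GT: "ctx_ext ?G T"
    using ctx_ext_trans[OF ext_T ext'] .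
  have "wf_typ T (capp T A2)"
    using capp_wf[OF wf_T] ctx_ext_wf_typ[OF ext_GT] instL_arr.prems(2) by simp
  from instL_arr.IH(2)[OF wf_T this]
  have wf_D: "wf_ctx D" and ext_D: "ctx_ext T D" and "dsub_ground D (TEVar a2) (capp T A2)"
    by blast+
  then have sub2: "dsub_ground D (TEVar a2) A2"
    using dsub_ground_capp(2)[OF ext_D] by simp
  have "CSolved a (TArr (TEVar a1) (TEVar a2)) \<in> set D"
    using ctx_ext_solved[OF ctx_ext_trans[OF ext_D ext_T]] by simp
  then have "dsub_ground D (TEVar a) (TArr A1 A2)"
    by (intro dsub_ground_cong[OF dsub_ground_arr[OF ext_D sub1 sub2]])
      (simp_all add: ground_inst_solved)
  with wf_D ctx_ext_trans[OF ext_D ext_GT] show ?case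
    by blast
next
  case (instL_allR a G b B D D')
  have "wf_ctx (G @ [CTVar b])"
    using instL_allR.prems(1) instL_allR.hyps(2) by (simp add: wf_ctx_snoc)
  from instL_allR.IH[OF this wf_typ_open_TVar[OF instL_allR.prems(2)]]
  have wf: "wf_ctx (D @ [CTVar b] @ D')" and ext: "ctx_ext (G @ [CTVar b]) (D @ [CTVar b] @ D')"
    and sub: "dsub_ground (D @ [CTVar b] @ D') (TEVar a) (open_typ B (TVar b))"
    by blast+
  have ext_GD: "ctx_ext G D"
    using ctx_ext_cut[of G "CTVar b" "[]" D D'] wf ext by simp
  have "wf_typ G (TEVar a)"
    using instL_allR.hyps(1) by (auto intro: wf_evar simp: evars_def)
  with wf ext_GD show ?case
    using wf_ctx_appendD[of D "[CTVar b] @ D'"]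
      dsub_ground_allR[OF wf ext_GD ext _ instL_allR.prems(2) instL_allR.hyps(2) sub]
    by blast
next
  case (instR_solve t G1 a G2)
  then show ?case
    using wf_ctx_solve ctx_ext_solve dsub_ground_solved(2) by simp
next
  case (instR_reach G1 a G2 b G3)
  have "wf_typ (G1 @ [CEVar a] @ G2) (TEVar a)"
    by (auto intro: wf_evar simp: evars_def)
  with instR_reach show ?case
    using wf_ctx_solve[of "G1 @ [CEVar a] @ G2" b G3 "TEVar a"]
      ctx_ext_solve[of "G1 @ [CEVar a] @ G2" b G3 "TEVar a"] dsub_ground_solved(1)[of b "TEVar a"]
    by simp
next
  case (instR_arr a1 a2 G1 a G2 A1 A2 T D)
  let ?G = "G1 @ [CEVar a] @ G2"
  let ?G' = "G1 @ [CEVar a2, CEVar a1, CSolved a (TArr (TEVar a1) (TEVar a2))] @ G2"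
  have ext': "ctx_ext ?G ?G'"
    by (rule ctx_ext_split_arrow)
  have wf': "wf_ctx ?G'"
    using wf_ctx_split_arrow[OF instR_arr.prems(1) instR_arr.hyps(1-3)] .
  have "wf_typ ?G' A1"
    using instR_arr.prems(2) ctx_ext_wf_typ[OF ext'] by simp
  from instR_arr.IH(1)[OF wf' this]
  have wf_T: "wf_ctx T" and ext_T: "ctx_ext ?G' T" and sub1: "dsub_ground T (TEVar a1) A1"
    by blast+
  have ext_GT: "ctx_ext ?G T"
    using ctx_ext_trans[OF ext_T ext'] .
  have "wf_typ T (capp T A2)"
    using capp_wf[OF wf_T] ctx_ext_wf_typ[OF ext_GT] instR_arr.prems(2) by simp
  from instR_arr.IH(2)[OF wf_T this]
  have wf_D: "wf_ctx D" and ext_D: "ctx_ext T D" and "dsub_ground D (capp T A2) (TEVar a2)"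
    by blast+
  then have sub2: "dsub_ground D A2 (TEVar a2)"
    using dsub_ground_capp(1)[OF ext_D] by simp
  have "CSolved a (TArr (TEVar a1) (TEVar a2)) \<in> set D"
    using ctx_ext_solved[OF ctx_ext_trans[OF ext_D ext_T]] by simp
  then have "dsub_ground D (TArr A1 A2) (TEVar a)"
    by (intro dsub_ground_cong[OF dsub_ground_arr[OF ext_D sub1 sub2]])
      (simp_all add: ground_inst_solved)
  with wf_D ctx_ext_trans[OF ext_D ext_GT] show ?case
    by blast
next
  case (instR_allL a G b B D D')
  have "wf_ctx (G @ [CMarker b, CEVar b])"
    using wf_ctx_marker_evar instR_allL.prems(1) instR_allL.hyps(2) .
  from instR_allL.IH[OF this wf_typ_open_TEVar[OF instR_allL.prems(2)]]
  have wf: "wf_ctx (D @ [CMarker b] @ D')"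
    and ext: "ctx_ext (G @ [CMarker b, CEVar b]) (D @ [CMarker b] @ D')"
    and sub: "dsub_ground (D @ [CMarker b] @ D') (open_typ B (TEVar b)) (TEVar a)"
    by blast+
  have ext_GD: "ctx_ext G D"
    using ctx_ext_cut[of G "CMarker b" "[CEVar b]" D D'] wf ext by simp
  have "wf_typ G (TEVar a)"
    using instR_allL.hyps(1) by (auto intro: wf_evar simp: evars_def)
  with wf ext_GD show ?case
    using wf_ctx_appendD[of D "[CMarker b] @ D'"]
      dsub_ground_allL[OF wf ext_GD ext instR_allL.prems(2) _ sub]
    by blast
qed

lemma subtyping_sound:
  "asub G A B D \<Longrightarrow> wf_ctx G \<Longrightarrow> wf_typ G A \<Longrightarrow> wf_typ G B \<Longrightarrow>
     wf_ctx D \<and> ctx_ext G D \<and> dsub_ground D A B"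
proof (induction rule: asub.induct)
  case (as_arr G B1 A1 T A2 B2 D)
  from as_arr.IH(1)[OF as_arr.prems(1)] as_arr.prems(2,3)
  have wf_T: "wf_ctx T" and ext_T: "ctx_ext G T" and sub1: "dsub_ground T B1 A1"
    by simp_all
  have "wf_typ T (capp T A2)" "wf_typ T (capp T B2)"
    using capp_wf[OF wf_T] ctx_ext_wf_typ[OF ext_T] as_arr.prems(2,3) by simp_all
  from as_arr.IH(2)[OF wf_T this]
  have wf_D: "wf_ctx D" and ext_D: "ctx_ext T D" and "dsub_ground D (capp T A2) (capp T B2)"
    by blast+
  then have "dsub_ground D A2 B2"
    using dsub_ground_capp[OF ext_D] by simp
  with wf_D ctx_ext_trans[OF ext_D ext_T] show ?case
    using dsub_ground_arr[OF ext_D sub1] by blast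
next
  case (as_allL a G A B D T)
  have "wf_ctx (G @ [CMarker a, CEVar a])"
    using wf_ctx_marker_evar as_allL.prems(1) as_allL.hyps(1) .
  moreover have "wf_typ (G @ [CMarker a, CEVar a]) B"
    using as_allL.prems(3) by (rule wf_typ_weaken) auto
  ultimately have wf: "wf_ctx (D @ [CMarker a] @ T)"
    and ext: "ctx_ext (G @ [CMarker a, CEVar a]) (D @ [CMarker a] @ T)"
    and sub: "dsub_ground (D @ [CMarker a] @ T) (open_typ A (TEVar a)) B"
    using as_allL.IH wf_typ_open_TEVar[OF as_allL.prems(2)] by blast+
  have ext_GD: "ctx_ext G D"
    using ctx_ext_cut[of G "CMarker a" "[CEVar a]" D T] wf ext by simp
  with wf show ?case
    using wf_ctx_appendD[of D "[CMarker a] @ T"]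
      dsub_ground_allL[OF wf ext_GD ext as_allL.prems(2,3) sub]
    by blast
next
  case (as_allR b G A B D T)
  have "wf_ctx (G @ [CTVar b])"
    using as_allR.prems(1) as_allR.hyps(1) by (simp add: wf_ctx_snoc)
  moreover have "wf_typ (G @ [CTVar b]) A"
    using as_allR.prems(2) by (rule wf_typ_weaken) auto
  ultimately have wf: "wf_ctx (D @ [CTVar b] @ T)"
    and ext: "ctx_ext (G @ [CTVar b]) (D @ [CTVar b] @ T)"
    and sub: "dsub_ground (D @ [CTVar b] @ T) A (open_typ B (TVar b))"
    using as_allR.IH wf_typ_open_TVar[OF as_allR.prems(3)] by blast+
  have ext_GD: "ctx_ext G D"
    using ctx_ext_cut[of G "CTVar b" "[]" D T] wf ext by simp
  with wf show ?case
    using wf_ctx_appendD[of D "[CTVar b] @ T"]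
      dsub_ground_allR[OF wf ext_GD ext as_allR.prems(2,3) as_allR.hyps(1) sub]
    by blast
next
  case (as_instL a G A D)
  then show ?case
    using instantiation_sound(1) by blast
next
  case (as_instR a G A D)
  then show ?case
    using instantiation_sound(2) by blast
qed (auto intro: ctx_ext_refl dsub_ground_refl)

theorem mainTheorem7:
  assumes "decl_ctx \<Psi>" and "wf_ctx \<Psi>"
    and "wf_typ \<Psi> A" and "wf_typ \<Psi> B"
    and "asub \<Psi> A B \<Delta>"
  shows "dsub \<Psi> A B"
proof -
  have "wf_ctx \<Delta>" "ctx_ext \<Psi> \<Delta>" "dsub_ground \<Delta> A B"
    using subtyping_sound[OF assms(5,2,3,4)] by auto
  moreover obtain \<theta> where "ground_inst \<Delta> \<theta>"
    using ground_inst_extend[of "[]" \<Delta> "\<lambda>_. TUnit"] calculation(1) by (auto simp: ground_inst_def)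
  ultimately have "dsub \<Psi> (tsub \<theta> A) (tsub \<theta> B)"
    using ctx_ext_tvars by (auto simp: dsub_ground_def)
  moreover have "evars \<Psi> = {}"
    using assms(1) by (auto simp: decl_ctx_def evars_def)
  then have "tsub \<theta> A = A" "tsub \<theta> B = B"
    using assms(3,4) by (auto simp: wf_typ_iff intro: tsub_no_fev)
  ultimately show ?thesis
    by simp
qed

end
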